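(* Let $0,1,\dots,5$ be points of $\mathbb{P}^3(\mathbb{C})$ with chosen representative vectors $v_0,\dots,v_5$, and assume $[0123]\neq 0$ (so the lines $01$ and $23$ are skew). Define the vectors $$p=[0125]v_3-[0135]v_2,\qquad q=-[0124]v_3-[0234]v_1,\qquad r=[1345]v_2-[2345]v_1,$$ which represent the intersection points $23\cap 015$, $13\cap 024$, $12\cap 345$ respectively (line meets plane). Then the polynomial identity $$-[v_1v_0v_2q]\,[v_0\,p\,v_3\,r]+[p\,v_0v_2q]\,[v_0v_1v_3r] \;=\; [0123]^2\big([0125][0234][1345]-[0124][2345][0135]\big)$$ holds. Consequently, if $p,q,r$ are nonzero (i.e. the plane $015$ does not contain the line $23$, the plane $024$ does not contain the line $13$, and the plane $345$ does not contain the line $12$), then the three lines joining $1$ to $\langle p\rangle$, $2$ to $\langle q\rangle$, and $3$ to $\langle r\rangle$ pass through a common point if and only if $[0125][0234][1345]-[0124][2345][0135]=0$.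
   Context: For vectors $a,b,c,d\in\mathbb{C}^4$, $[abcd]$ is the determinant of the $4\times4$ matrix with columns $a,b,c,d$; for point labels, $[ijkl]$ means $[v_iv_jv_kv_l]$. For a nonzero vector $v$, $\langle v\rangle$ denotes the corresponding point of $\mathbb{P}^3$. A line $ij$ is the line through points $i,j$; a plane $ijk$ is the plane through three non-collinear points. *)

theory Defs
  imports "HOL-Analysis.Analysis"
begin

definition det4 :: "complex^4 \<Rightarrow> complex^4 \<Rightarrow> complex^4 \<Rightarrow> complex^4 \<Rightarrow> complex" where
  "det4 a b c d = det (\<chi> i j. (if j = (1::4) then a else if j = 2 then b else if j = 3 then c else d) $ i)"

text \<open>The point with representative x lies on the projective line through the points
  with (linearly independent) representatives u and w, i.e. x is a C-linear combination of u, w.\<close>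
definition on_line :: "complex^4 \<Rightarrow> complex^4 \<Rightarrow> complex^4 \<Rightarrow> bool" where
  "on_line x u w \<longleftrightarrow> (\<exists>a b. x = a *s u + b *s w)"

definition concurrent3 ::
  "complex^4 \<Rightarrow> complex^4 \<Rightarrow> complex^4 \<Rightarrow> complex^4 \<Rightarrow> complex^4 \<Rightarrow> complex^4 \<Rightarrow> bool" where
  "concurrent3 u1 w1 u2 w2 u3 w3 \<longleftrightarrow>
     (\<exists>x. x \<noteq> 0 \<and> on_line x u1 w1 \<and> on_line x u2 w2 \<and> on_line x u3 w3)"

end

theory Submission
  imports Defs
begin

text \<open>The points \<open>v\<^sub>1\<close>, \<open>p\<close>, \<open>v\<^sub>2\<close>, \<open>q\<close>, \<open>v\<^sub>3\<close>, \<open>r\<close> all lie in the span of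
  \<open>v\<^sub>1, v\<^sub>2, v\<^sub>3\<close>, which are independent because \<open>[0123] \<noteq> 0\<close>. In coordinates with respect to
  this basis each of the three lines is cut out by one linear form, so the lines are concurrent iff
  the \<open>3 \<times> 3\<close> matrix of these forms is singular, and its determinant is
  \<open>[0125][0234][1345] - [0124][2345][0135]\<close>. The bracket identity is a multilinear expansion in
  which each of the four brackets collapses to a single term times \<open>[0123]\<close>.\<close>

lemma det_rows_update_lincomb:
  fixes g :: "'n::finite \<Rightarrow> 'a::comm_ring_1^'n"
  shows "det (\<chi> i. (g(k := x *s u + y *s w)) i)
           = x * det (\<chi> i. (g(k := u)) i) + y * det (\<chi> i. (g(k := w)) i)"
  using det_row_add[of k "\<lambda>_. x *s u" "\<lambda>_. y *s w" g]
    det_row_mul[of k x "\<lambda>_. u" g] det_row_mul[of k y "\<lambda>_. w" g]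
  by (simp add: fun_upd_def)

definition columns4 :: "'a^4 \<Rightarrow> 'a^4 \<Rightarrow> 'a^4 \<Rightarrow> 'a^4 \<Rightarrow> 4 \<Rightarrow> 'a^4" where
  "columns4 a b c d = (\<lambda>j. if j = 1 then a else if j = 2 then b else if j = 3 then c else d)"

lemma det4_eq_det_rows: "det4 a b c d = det (\<chi> i. columns4 a b c d i)"
  unfolding det4_def columns4_def
  by (subst det_transpose[symmetric]) (rule arg_cong[where f=det], simp add: vec_eq_iff transpose_def)

lemma columns4_update:
  "columns4 a b c d = (columns4 a' b c d)(1 := a)"
  "columns4 a b c d = (columns4 a b' c d)(2 := b)"
  "columns4 a b c d = (columns4 a b c' d)(3 := c)"
  "columns4 a b c d = (columns4 a b c d')(4 := d)"
  by (auto simp: columns4_def fun_eq_iff) (metis exhaust_4)+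

lemma det4_lincomb:
  "det4 (x *s u + y *s w) b c d = x * det4 u b c d + y * det4 w b c d"
  "det4 a (x *s u + y *s w) c d = x * det4 a u c d + y * det4 a w c d"
  "det4 a b (x *s u + y *s w) d = x * det4 a b u d + y * det4 a b w d"
  "det4 a b c (x *s u + y *s w) = x * det4 a b c u + y * det4 a b c w"
  unfolding det4_eq_det_rows
  by (subst (1 2 3) columns4_update, rule det_rows_update_lincomb)+

lemma det4_add:
  "det4 (u + w) b c d = det4 u b c d + det4 w b c d"
  "det4 a (u + w) c d = det4 a u c d + det4 a w c d"
  "det4 a b (u + w) d = det4 a b u d + det4 a b w d"
  "det4 a b c (u + w) = det4 a b c u + det4 a b c w"
  using det4_lincomb[where x=1 and y=1] by simp_all

lemma det4_scale:
  "det4 (x *s u) b c d = x * det4 u b c d"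
  "det4 a (x *s u) c d = x * det4 a u c d"
  "det4 a b (x *s u) d = x * det4 a b u d"
  "det4 a b c (x *s u) = x * det4 a b c u"
  using det4_lincomb[where y=0] by simp_all

lemma det4_repeated:
  "det4 a a c d = 0" "det4 a b a d = 0" "det4 a b c a = 0"
  "det4 a b b d = 0" "det4 a b c b = 0" "det4 a b c c = 0"
  unfolding det4_eq_det_rows
  by (rule det_identical_rows[of 1 2] det_identical_rows[of 1 3] det_identical_rows[of 1 4]
      det_identical_rows[of 2 3] det_identical_rows[of 2 4] det_identical_rows[of 3 4];
      simp add: row_def columns4_def)+

lemma det4_swap:
  "det4 b a c d = - det4 a b c d"
  "det4 a c b d = - det4 a b c d"
  "det4 a b d c = - det4 a b c d"
  using det4_repeated(1)[of "a + b" c d] det4_repeated(4)[of a "b + c" d]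
    det4_repeated(6)[of a b "c + d"]
  unfolding det4_add by (simp_all add: det4_repeated eq_neg_iff_add_eq_0 add.commute)

lemma det4_coordinates_unique:
  assumes "det4 v0 v1 v2 v3 \<noteq> 0"
    and "\<alpha> *s v1 + \<beta> *s v2 + \<gamma> *s v3 = \<alpha>' *s v1 + \<beta>' *s v2 + \<gamma>' *s v3"
  shows "\<alpha> = \<alpha>' \<and> \<beta> = \<beta>' \<and> \<gamma> = \<gamma>'"
proof -
  let ?x = "\<alpha> *s v1 + \<beta> *s v2 + \<gamma> *s v3" and ?x' = "\<alpha>' *s v1 + \<beta>' *s v2 + \<gamma>' *s v3"
  have "det4 v0 ?x v2 v3 = det4 v0 ?x' v2 v3" "det4 v0 v1 ?x v3 = det4 v0 v1 ?x' v3"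
    "det4 v0 v1 v2 ?x = det4 v0 v1 v2 ?x'"
    using assms(2) by simp_all
  then show ?thesis
    using assms(1) by (simp add: det4_add det4_scale det4_repeated)
qed

lemma on_line_iff_coordinates:
  fixes u v w :: "complex^4"
  assumes unique: "\<And>\<alpha> \<beta> \<gamma> \<alpha>' \<beta>' \<gamma>'. \<alpha> *s u + \<beta> *s v + \<gamma> *s w = \<alpha>' *s u + \<beta>' *s v + \<gamma>' *s w
      \<Longrightarrow> \<alpha> = \<alpha>' \<and> \<beta> = \<beta>' \<and> \<gamma> = \<gamma>'"
    and ab: "a \<noteq> 0 \<or> b \<noteq> 0"
  shows "on_line (\<alpha> *s u + \<beta> *s v + \<gamma> *s w) u (a *s w - b *s v) \<longleftrightarrow> a * \<beta> + b * \<gamma> = 0"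
proof
  assume "on_line (\<alpha> *s u + \<beta> *s v + \<gamma> *s w) u (a *s w - b *s v)"
  then obtain s t where "\<alpha> *s u + \<beta> *s v + \<gamma> *s w = s *s u + (- t * b) *s v + (t * a) *s w"
    unfolding on_line_def by (auto simp: vec_eq_iff algebra_simps)
  then have "\<beta> = - t * b" "\<gamma> = t * a"
    using unique by blast+
  then show "a * \<beta> + b * \<gamma> = 0"
    by simp
next
  assume "a * \<beta> + b * \<gamma> = 0"
  then obtain t where "\<beta> = - t * b" "\<gamma> = t * a"
  proof (cases "a = 0")
    case True
    with ab \<open>a * \<beta> + b * \<gamma> = 0\<close> show ?thesis
      by (intro that[of "- \<beta> / b"]) auto
  next
    case False
    with \<open>a * \<beta> + b * \<gamma> = 0\<close> show ?thesis
      by (intro that[of "\<gamma> / a"]) (auto simp: field_simps add_eq_0_iff)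
  qed
  then have "\<alpha> *s u + \<beta> *s v + \<gamma> *s w = \<alpha> *s u + t *s (a *s w - b *s v)"
    by (simp add: vec_eq_iff algebra_simps)
  then show "on_line (\<alpha> *s u + \<beta> *s v + \<gamma> *s w) u (a *s w - b *s v)"
    unfolding on_line_def by blast
qed

lemma on_lines_iff_coordinates:
  fixes \<alpha> \<beta> \<gamma> :: complex
  assumes skew: "det4 v0 v1 v2 v3 \<noteq> 0"
    and ab: "a \<noteq> 0 \<or> b \<noteq> 0" and cd: "c \<noteq> 0 \<or> d \<noteq> 0" and ef: "e \<noteq> 0 \<or> f \<noteq> 0"
  defines "x \<equiv> \<alpha> *s v1 + \<beta> *s v2 + \<gamma> *s v3"
  shows "on_line x v1 (a *s v3 - b *s v2) \<longleftrightarrow> a * \<beta> + b * \<gamma> = 0"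
    and "on_line x v2 (- (c *s v3) - d *s v1) \<longleftrightarrow> - c * \<alpha> + d * \<gamma> = 0"
    and "on_line x v3 (e *s v2 - f *s v1) \<longleftrightarrow> e * \<alpha> + f * \<beta> = 0"
proof -
  note unique = det4_coordinates_unique[OF skew]
  show "on_line x v1 (a *s v3 - b *s v2) \<longleftrightarrow> a * \<beta> + b * \<gamma> = 0"
    unfolding x_def by (rule on_line_iff_coordinates[of v1 v2 v3, OF unique ab])
  have "x = \<beta> *s v2 + \<alpha> *s v1 + \<gamma> *s v3" "- (c *s v3) - d *s v1 = (- c) *s v3 - d *s v1"
    by (simp_all add: x_def vec_eq_iff algebra_simps)
  moreover have "\<beta> = \<beta>' \<and> \<alpha> = \<alpha>' \<and> \<gamma> = \<gamma>'"
    if "\<beta> *s v2 + \<alpha> *s v1 + \<gamma> *s v3 = \<beta>' *s v2 + \<alpha>' *s v1 + \<gamma>' *s v3" for \<alpha> \<beta> \<gamma> \<alpha>' \<beta>' \<gamma>'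
    using that unique[of \<alpha> \<beta> \<gamma> \<alpha>' \<beta>' \<gamma>'] by (simp add: ac_simps)
  ultimately show "on_line x v2 (- (c *s v3) - d *s v1) \<longleftrightarrow> - c * \<alpha> + d * \<gamma> = 0"
    using on_line_iff_coordinates[of v2 v1 v3 "- c" d] cd by simp
  have "x = \<gamma> *s v3 + \<alpha> *s v1 + \<beta> *s v2"
    by (simp add: x_def vec_eq_iff algebra_simps)
  moreover have "\<gamma> = \<gamma>' \<and> \<alpha> = \<alpha>' \<and> \<beta> = \<beta>'"
    if "\<gamma> *s v3 + \<alpha> *s v1 + \<beta> *s v2 = \<gamma>' *s v3 + \<alpha>' *s v1 + \<beta>' *s v2" for \<alpha> \<beta> \<gamma> \<alpha>' \<beta>' \<gamma>'
    using that unique[of \<alpha> \<beta> \<gamma> \<alpha>' \<beta>' \<gamma>'] by (simp add: ac_simps)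
  ultimately show "on_line x v3 (e *s v2 - f *s v1) \<longleftrightarrow> e * \<alpha> + f * \<beta> = 0"
    using on_line_iff_coordinates[of v3 v1 v2 e f] ef by simp
qed

text \<open>Row \<open>i\<close> holds the linear form, in coordinates with respect to \<open>v\<^sub>1, v\<^sub>2, v\<^sub>3\<close>, that cuts out
  the \<open>i\<close>-th of the three lines in the plane spanned by \<open>v\<^sub>1, v\<^sub>2, v\<^sub>3\<close>.\<close>
definition concurrency_matrix ::
  "complex \<Rightarrow> complex \<Rightarrow> complex \<Rightarrow> complex \<Rightarrow> complex \<Rightarrow> complex \<Rightarrow> complex^3^3" where
  "concurrency_matrix a b c d e f = vector [vector [0, a, b], vector [- c, 0, d], vector [e, f, 0]]"

lemma concurrency_matrix_mult:
  "concurrency_matrix a b c d e f *v y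
     = vector [a * y$2 + b * y$3, - c * y$1 + d * y$3, e * y$1 + f * y$2]"
  by (simp add: concurrency_matrix_def vec_eq_iff forall_3 matrix_vector_mult_def sum_3)

lemma det_concurrency_matrix: "det (concurrency_matrix a b c d e f) = a * d * e - c * f * b"
  by (simp add: concurrency_matrix_def det_3 algebra_simps)

lemma det_eq_0_iff_nontrivial_kernel:
  fixes A :: "'a::field^'n^'n"
  shows "det A = 0 \<longleftrightarrow> (\<exists>x. x \<noteq> 0 \<and> A *v x = 0)"
  using invertible_det_nz[of A] matrix_left_invertible_ker[of A] invertible_left_inverse[of A]
  by auto

lemma concurrent3_iff_kernel:
  assumes skew: "det4 v0 v1 v2 v3 \<noteq> 0"
    and ab: "a \<noteq> 0 \<or> b \<noteq> 0" and cd: "c \<noteq> 0 \<or> d \<noteq> 0" and ef: "e \<noteq> 0 \<or> f \<noteq> 0"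
  shows "concurrent3 v1 (a *s v3 - b *s v2) v2 (- (c *s v3) - d *s v1) v3 (e *s v2 - f *s v1)
           \<longleftrightarrow> (\<exists>y. y \<noteq> 0 \<and> concurrency_matrix a b c d e f *v y = 0)"
    (is "concurrent3 v1 ?p v2 ?q v3 ?r \<longleftrightarrow> _")
proof -
  define X :: "complex^3 \<Rightarrow> complex^4" where "X y = y$1 *s v1 + y$2 *s v2 + y$3 *s v3" for y
  have on_lines_iff_kernel:
    "on_line (X y) v1 ?p \<and> on_line (X y) v2 ?q \<and> on_line (X y) v3 ?r
       \<longleftrightarrow> concurrency_matrix a b c d e f *v y = 0" for y
    unfolding X_def on_lines_iff_coordinates[OF skew ab cd ef] concurrency_matrix_mult
    by (simp add: vec_eq_iff forall_3)
  have X_eq_0_iff: "X y = 0 \<longleftrightarrow> y = 0" for y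
    using det4_coordinates_unique[OF skew, of "y$1" "y$2" "y$3" 0 0 0]
    by (auto simp: X_def vec_eq_iff forall_3)
  have X_onto_line: "\<exists>y. x = X y" if "on_line x v1 ?p" for x
  proof -
    from that obtain s t where "x = s *s v1 + t *s ?p"
      unfolding on_line_def by blast
    then have "x = X (vector [s, - t * b, t * a])"
      by (simp add: X_def vec_eq_iff algebra_simps)
    then show ?thesis ..
  qed
  show ?thesis
  proof
    assume "concurrent3 v1 ?p v2 ?q v3 ?r"
    then obtain x where x: "x \<noteq> 0" "on_line x v1 ?p" "on_line x v2 ?q" "on_line x v3 ?r"
      unfolding concurrent3_def by blast
    moreover obtain y where "x = X y"
      using X_onto_line x(2) by blast
    ultimately show "\<exists>y. y \<noteq> 0 \<and> concurrency_matrix a b c d e f *v y = 0"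
      using on_lines_iff_kernel X_eq_0_iff by blast
  next
    assume "\<exists>y. y \<noteq> 0 \<and> concurrency_matrix a b c d e f *v y = 0"
    then show "concurrent3 v1 ?p v2 ?q v3 ?r"
      unfolding concurrent3_def using on_lines_iff_kernel X_eq_0_iff by blast
  qed
qed

lemma concurrent3_iff:
  assumes "det4 v0 v1 v2 v3 \<noteq> 0"
    and "a \<noteq> 0 \<or> b \<noteq> 0" "c \<noteq> 0 \<or> d \<noteq> 0" "e \<noteq> 0 \<or> f \<noteq> 0"
  shows "concurrent3 v1 (a *s v3 - b *s v2) v2 (- (c *s v3) - d *s v1) v3 (e *s v2 - f *s v1)
           \<longleftrightarrow> a * d * e - c * f * b = 0"
  unfolding concurrent3_iff_kernel[OF assms] det_eq_0_iff_nontrivial_kernel[symmetric]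
  by (rule arg_cong[where f = "\<lambda>z. z = 0"], rule det_concurrency_matrix)

lemma bracket_identity:
  assumes p: "p = a *s v3 - b *s v2" and q: "q = - (c *s v3) - d *s v1"
    and r: "r = e *s v2 - f *s v1"
  shows "- det4 v1 v0 v2 q * det4 v0 p v3 r + det4 p v0 v2 q * det4 v0 v1 v3 r
           = (det4 v0 v1 v2 v3)^2 * (a * d * e - c * f * b)"
proof -
  let ?D = "det4 v0 v1 v2 v3"
  have p': "p = a *s v3 + (- b) *s v2" and q': "q = (- c) *s v3 + (- d) *s v1"
    and r': "r = e *s v2 + (- f) *s v1"
    using p q r by (simp_all add: vec_eq_iff)
  have D_perms: "det4 v1 v0 v2 v3 = - ?D" "det4 v0 v2 v3 v1 = ?D" "det4 v3 v0 v2 v1 = ?D"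
    "det4 v0 v1 v3 v2 = - ?D"
    by (metis det4_swap minus_minus)+
  have "det4 v1 v0 v2 q = c * ?D" "det4 v0 p v3 r = b * f * ?D"
    "det4 p v0 v2 q = - a * d * ?D" "det4 v0 v1 v3 r = - e * ?D"
    unfolding p' q' r' det4_lincomb by (simp_all add: det4_repeated D_perms algebra_simps)
  then show ?thesis
    by (simp add: power2_eq_square algebra_simps)
qed

theorem lemma3p1:
  fixes v0 v1 v2 v3 v4 v5 p q r :: "complex^4"
  assumes nz: "v0 \<noteq> 0" "v1 \<noteq> 0" "v2 \<noteq> 0" "v3 \<noteq> 0" "v4 \<noteq> 0" "v5 \<noteq> 0"
    and skew: "det4 v0 v1 v2 v3 \<noteq> 0"
    and p_def: "p = det4 v0 v1 v2 v5 *s v3 - det4 v0 v1 v3 v5 *s v2"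
    and q_def: "q = - (det4 v0 v1 v2 v4 *s v3) - det4 v0 v2 v3 v4 *s v1"
    and r_def: "r = det4 v1 v3 v4 v5 *s v2 - det4 v2 v3 v4 v5 *s v1"
  shows "- det4 v1 v0 v2 q * det4 v0 p v3 r + det4 p v0 v2 q * det4 v0 v1 v3 r
           = (det4 v0 v1 v2 v3)^2 *
             (det4 v0 v1 v2 v5 * det4 v0 v2 v3 v4 * det4 v1 v3 v4 v5
              - det4 v0 v1 v2 v4 * det4 v2 v3 v4 v5 * det4 v0 v1 v3 v5)
         \<and> (p \<noteq> 0 \<and> q \<noteq> 0 \<and> r \<noteq> 0 \<longrightarrow>
           (concurrent3 v1 p v2 q v3 r \<longleftrightarrow>
             det4 v0 v1 v2 v5 * det4 v0 v2 v3 v4 * det4 v1 v3 v4 v5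
              - det4 v0 v1 v2 v4 * det4 v2 v3 v4 v5 * det4 v0 v1 v3 v5 = 0))"
proof (intro conjI impI)
  show "- det4 v1 v0 v2 q * det4 v0 p v3 r + det4 p v0 v2 q * det4 v0 v1 v3 r
          = (det4 v0 v1 v2 v3)^2 *
            (det4 v0 v1 v2 v5 * det4 v0 v2 v3 v4 * det4 v1 v3 v4 v5
             - det4 v0 v1 v2 v4 * det4 v2 v3 v4 v5 * det4 v0 v1 v3 v5)"
    by (rule bracket_identity[OF p_def q_def r_def])
next
  assume "p \<noteq> 0 \<and> q \<noteq> 0 \<and> r \<noteq> 0"
  then have "det4 v0 v1 v2 v5 \<noteq> 0 \<or> det4 v0 v1 v3 v5 \<noteq> 0"
    "det4 v0 v1 v2 v4 \<noteq> 0 \<or> det4 v0 v2 v3 v4 \<noteq> 0"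
    "det4 v1 v3 v4 v5 \<noteq> 0 \<or> det4 v2 v3 v4 v5 \<noteq> 0"
    using p_def q_def r_def by auto
  then show "concurrent3 v1 p v2 q v3 r \<longleftrightarrow>
      det4 v0 v1 v2 v5 * det4 v0 v2 v3 v4 * det4 v1 v3 v4 v5
      - det4 v0 v1 v2 v4 * det4 v2 v3 v4 v5 * det4 v0 v1 v3 v5 = 0"
    unfolding p_def q_def r_def by (rule concurrent3_iff[OF skew])
qed

end
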